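(* Let $X$ be a separable Fréchet space and $p$ a non-trivial continuous seminorm on $X$. Then for every dense countable set $A\subseteq X$ there is $B\subseteq A$ such that $B$ is $p$-independent and dense in $X$.
   Context: A Fréchet space is a complete metrizable locally convex (Hausdorff) space over $\mathbb{K}\in\{\mathbb{R},\mathbb{C}\}$. For a seminorm $p$, $\ker p=\{x:p(x)=0\}$; $p$ is non-trivial if $X/\ker p$ is infinite dimensional. A set $A\subseteq X$ is $p$-independent if $p(z_1a_1+\dots+z_na_n)\neq0$ for every $n\in\mathbb{N}$, pairwise distinct $a_1,\dots,a_n\in A$ and nonzero $z_1,\dots,z_n\in\mathbb{K}$. *)

theory Defs
  imports "HOL-Analysis.Analysis"
begin

text \<open>Vector spaces over a scalar field 'k with scalar multiplication smul.
  The scalar field is a complete real normed field, i.e. (Gelfand-Mazur) R or C.\<close>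

definition convex_wrt :: "('k::real_normed_field \<Rightarrow> 'a::ab_group_add \<Rightarrow> 'a) \<Rightarrow> 'a set \<Rightarrow> bool" where
  "convex_wrt smul V \<longleftrightarrow>
     (\<forall>x\<in>V. \<forall>y\<in>V. \<forall>t::real. 0 \<le> t \<and> t \<le> 1 \<longrightarrow>
        smul (of_real t) x + smul (of_real (1 - t)) y \<in> V)"

text \<open>Hausdorffness is automatic for a metric.\<close>
definition frechet_space :: "('k::{real_normed_field,banach} \<Rightarrow> 'a::{ab_group_add,complete_space} \<Rightarrow> 'a) \<Rightarrow> bool" where
  "frechet_space smul \<longleftrightarrow>
     vector_space smul \<and>
     (\<forall>x y z::'a. dist (x + z) (y + z) = dist x y) \<and>
     continuous_on UNIV (\<lambda>w::'k \<times> 'a. smul (fst w) (snd w)) \<and>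
     (\<forall>U::'a set. open U \<and> 0 \<in> U \<longrightarrow>
        (\<exists>V. open V \<and> 0 \<in> V \<and> V \<subseteq> U \<and> convex_wrt smul V))"

definition separable_type :: "'a::topological_space itself \<Rightarrow> bool" where
  "separable_type _ \<longleftrightarrow> (\<exists>D::'a set. countable D \<and> closure D = UNIV)"

definition seminorm_wrt :: "('k::real_normed_field \<Rightarrow> 'a::ab_group_add \<Rightarrow> 'a) \<Rightarrow> ('a \<Rightarrow> real) \<Rightarrow> bool" where
  "seminorm_wrt smul p \<longleftrightarrow>
     (\<forall>x y. p (x + y) \<le> p x + p y) \<and> (\<forall>c x. p (smul c x) = norm c * p x)"

definition seminorm_kernel :: "('a \<Rightarrow> real) \<Rightarrow> 'a set" where
  "seminorm_kernel p = {x. p x = 0}"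

text \<open>p non-trivial: X / ker p is infinite dimensional, i.e. there is no finite F
  with X = span F + ker p.\<close>
definition nontrivial_seminorm :: "('k::field \<Rightarrow> 'a::ab_group_add \<Rightarrow> 'a) \<Rightarrow> ('a \<Rightarrow> real) \<Rightarrow> bool" where
  "nontrivial_seminorm smul p \<longleftrightarrow>
     \<not> (\<exists>F. finite F \<and> (\<forall>x. \<exists>y\<in>module.span smul F. x - y \<in> seminorm_kernel p))"

definition p_independent :: "('k::field \<Rightarrow> 'a::ab_group_add \<Rightarrow> 'a) \<Rightarrow> ('a \<Rightarrow> real) \<Rightarrow> 'a set \<Rightarrow> bool" where
  "p_independent smul p A \<longleftrightarrow>
     (\<forall>S z. finite S \<and> S \<noteq> {} \<and> S \<subseteq> A \<and> (\<forall>a\<in>S. z a \<noteq> 0) \<longrightarrow>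
        p (\<Sum>a\<in>S. smul (z a) a) \<noteq> 0)"

end

theory Submission
  imports Defs
begin

(* For a finite set F write W(F) = span F + ker p.  The proof rests on two facts:
   (1) W(F) is a proper subspace (non-triviality of p) which is closed with respect to the
       seminorm p, hence closed in X (continuity of p); being a proper subspace of a
       topological vector space it has empty interior.  Closedness of W(F) is proved by
       induction on F: adjoining a vector f outside W(F) keeps W(F + f) closed, because
       the coefficient of f in an approximating sequence is forced to be Cauchy.
   (2) If F is p-independent and a is not in W(F), then F + a is p-independent.
   Consequently every non-empty open set U contains a point a of A with F + a
   p-independent.  A greedy construction, meeting one after the other the countably many
   balls of radius 1/(k+1) centred at points of A, then yields the dense set B; it is
   p-independent because p-independence is a property of finite character. *)

definition seminorm_closed :: "('a::ab_group_add \<Rightarrow> real) \<Rightarrow> 'a set \<Rightarrow> bool" where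
  "seminorm_closed p S \<longleftrightarrow> (\<forall>x. (\<forall>e>0. \<exists>w\<in>S. p (x - w) < e) \<longrightarrow> x \<in> S)"

lemma seminorm_closed_seq:
  assumes "seminorm_closed p S" "\<And>n. w n \<in> S" "(\<lambda>n. p (x - w n)) \<longlonglongrightarrow> 0"
  shows "x \<in> S"
proof -
  have "\<exists>v\<in>S. p (x - v) < e" if "e > 0" for e
  proof -
    obtain n where "dist (p (x - w n)) 0 < e"
      using assms(3) \<open>e > 0\<close> unfolding lim_sequentially by blast
    then show ?thesis using assms(2)[of n] by (auto simp: abs_less_iff)
  qed
  then show ?thesis using assms(1) unfolding seminorm_closed_def by blast
qed

lemma Cauchy_by_majorant:
  fixes a :: "nat \<Rightarrow> 'a::metric_space"
  assumes "\<And>m n. dist (a m) (a n) \<le> b m + b n" "b \<longlonglongrightarrow> 0"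
  shows "Cauchy a"
proof (rule metric_CauchyI)
  fix e :: real assume "e > 0"
  then have "eventually (\<lambda>n. b n < e / 2) sequentially"
    using assms(2) by (intro order_tendstoD(2)) auto
  then obtain M where M: "\<And>n. n \<ge> M \<Longrightarrow> b n < e / 2"
    by (auto simp: eventually_sequentially)
  have "dist (a m) (a n) < e" if "m \<ge> M" "n \<ge> M" for m n
    using assms(1)[of m n] M[OF that(1)] M[OF that(2)] by linarith
  then show "\<exists>M. \<forall>m\<ge>M. \<forall>n\<ge>M. dist (a m) (a n) < e"
    by blast
qed

locale seminormed_space = vector_space smul
  for smul :: "'k::{real_normed_field,banach} \<Rightarrow> 'a::ab_group_add \<Rightarrow> 'a" +
  fixes p :: "'a \<Rightarrow> real"
  assumes p_triangle: "p (x + y) \<le> p x + p y"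
    and p_scale: "p (smul c x) = norm c * p x"
begin

lemma p_zero [simp]: "p 0 = 0"
  using p_scale[of 0 0] by simp

lemma p_minus: "p (- x) = p x"
  using p_scale[of "-1" x] by simp

lemma p_nonneg: "0 \<le> p x"
  using p_triangle[of x "- x"] p_minus[of x] by simp

lemma p_eq_0_iff_le: "p x = 0 \<longleftrightarrow> p x \<le> 0"
  using p_nonneg[of x] by linarith

lemma p_commute: "p (x - y) = p (y - x)"
  using p_minus[of "x - y"] by simp

lemma p_triangle_diff: "p (x - z) \<le> p (x - y) + p (y - z)"
  using p_triangle[of "x - y" "y - z"] by simp

definition span_plus_kernel :: "'a set \<Rightarrow> 'a set" where
  "span_plus_kernel F = {x. \<exists>y\<in>span F. p (x - y) = 0}"

lemma span_subset_span_plus_kernel: "span F \<subseteq> span_plus_kernel F"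
  unfolding span_plus_kernel_def by force

lemma subspace_span_plus_kernel: "subspace (span_plus_kernel F)"
proof (rule subspaceI)
  show "0 \<in> span_plus_kernel F"
    using span_subset_span_plus_kernel span_zero by blast
next
  fix x y assume "x \<in> span_plus_kernel F" "y \<in> span_plus_kernel F"
  then obtain x' y' where "x' \<in> span F" "p (x - x') = 0" "y' \<in> span F" "p (y - y') = 0"
    unfolding span_plus_kernel_def by blast
  moreover have "p (x + y - (x' + y')) \<le> p (x - x') + p (y - y')"
    using p_triangle[of "x - x'" "y - y'"] by (simp add: algebra_simps)
  ultimately show "x + y \<in> span_plus_kernel F"
    unfolding span_plus_kernel_def p_eq_0_iff_le
    by (intro CollectI bexI[of _ "x' + y'"] span_add) auto
next
  fix c x assume "x \<in> span_plus_kernel F"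
  then obtain x' where "x' \<in> span F" "p (x - x') = 0"
    unfolding span_plus_kernel_def by blast
  moreover have "smul c x - smul c x' = smul c (x - x')"
    by (simp add: scale_right_diff_distrib)
  ultimately show "smul c x \<in> span_plus_kernel F"
    unfolding span_plus_kernel_def
    by (intro CollectI bexI[of _ "smul c x'"] span_scale) (simp_all add: p_scale)
qed

lemma span_plus_kernel_insert_absorb:
  assumes "f \<in> span_plus_kernel F"
  shows "span_plus_kernel (insert f F) = span_plus_kernel F"
proof
  obtain f' where f': "f' \<in> span F" "p (f - f') = 0"
    using assms unfolding span_plus_kernel_def by blast
  show "span_plus_kernel (insert f F) \<subseteq> span_plus_kernel F"
  proof
    fix x assume "x \<in> span_plus_kernel (insert f F)"
    then obtain y where y: "y \<in> span (insert f F)" "p (x - y) = 0"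
      unfolding span_plus_kernel_def by blast
    then obtain c where c: "y - smul c f \<in> span F"
      using span_breakdown_eq by blast
    have eq: "x - (y - smul c f + smul c f') = (x - y) + smul c (f - f')"
      by (simp add: algebra_simps scale_right_diff_distrib)
    have "p (x - (y - smul c f + smul c f')) \<le> p (x - y) + p (smul c (f - f'))"
      unfolding eq by (rule p_triangle)
    then have "p (x - (y - smul c f + smul c f')) \<le> 0"
      using y(2) f'(2) by (simp add: p_scale)
    moreover have "y - smul c f + smul c f' \<in> span F"
      using c f'(1) by (intro span_add span_scale)
    ultimately show "x \<in> span_plus_kernel F"
      unfolding span_plus_kernel_def p_eq_0_iff_le by blast
  qed
  show "span_plus_kernel F \<subseteq> span_plus_kernel (insert f F)"
    unfolding span_plus_kernel_def using span_mono[of F "insert f F"] by blast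
qed

text \<open>A p-independent set stays p-independent when a vector outside span F + ker p is added:
  a vanishing combination involving a would express a modulo ker p through F.\<close>
lemma p_independent_insert:
  assumes "p_independent smul p F" "a \<notin> span_plus_kernel F"
  shows "p_independent smul p (insert a F)"
  unfolding p_independent_def
proof (intro allI impI)
  fix S and z :: "'a \<Rightarrow> 'k"
  assume S: "finite S \<and> S \<noteq> {} \<and> S \<subseteq> insert a F \<and> (\<forall>s\<in>S. z s \<noteq> 0)"
  show "p (\<Sum>s\<in>S. smul (z s) s) \<noteq> 0"
  proof (cases "a \<in> S")
    case False
    then show ?thesis using assms(1) S unfolding p_independent_def by blast
  next
    case True
    have za: "z a \<noteq> 0" using S True by auto
    define r where "r = (\<Sum>s\<in>S - {a}. smul (z s) s)"
    have sum: "(\<Sum>s\<in>S. smul (z s) s) = smul (z a) a + r"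
      unfolding r_def using S True by (simp add: sum.remove)
    have "r \<in> span F" unfolding r_def
      using S by (intro span_sum span_scale span_base) auto
    define y where "y = - smul (inverse (z a)) r"
    have "y \<in> span F"
      unfolding y_def using \<open>r \<in> span F\<close> by (intro span_neg span_scale)
    have "a - y = smul (inverse (z a)) (\<Sum>s\<in>S. smul (z s) s)"
      unfolding y_def sum using za by (simp add: scale_right_distrib)
    then have "p (a - y) = norm (inverse (z a)) * p (\<Sum>s\<in>S. smul (z s) s)"
      by (simp add: p_scale)
    then have "p (\<Sum>s\<in>S. smul (z s) s) = 0 \<Longrightarrow> a \<in> span_plus_kernel F"
      unfolding span_plus_kernel_def using \<open>y \<in> span F\<close> by auto
    then show ?thesis using assms(2) by blast
  qed
qed

lemma seminorm_closed_kernel: "seminorm_closed p (span_plus_kernel {})"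
  unfolding seminorm_closed_def span_plus_kernel_def
proof (intro allI impI)
  fix x assume x: "\<forall>e>0. \<exists>w\<in>{w. \<exists>y\<in>span {}. p (w - y) = 0}. p (x - w) < e"
  have "p x \<le> 0 + e" if "e > 0" for e
  proof -
    obtain w where "p w = 0" "p (x - w) < e" using x \<open>e > 0\<close> by auto
    then show ?thesis using p_triangle_diff[of x 0 w] by simp
  qed
  then have "p x \<le> 0" by (rule field_le_epsilon)
  then show "x \<in> {w. \<exists>y\<in>span {}. p (w - y) = 0}"
    using p_eq_0_iff_le by auto
qed

lemma span_plus_kernel_distance:
  assumes "seminorm_closed p (span_plus_kernel F)" "f \<notin> span_plus_kernel F"
  obtains \<epsilon> where "\<epsilon> > 0" "\<And>c y. y \<in> span F \<Longrightarrow> norm c * \<epsilon> \<le> p (smul c f - y)"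
proof -
  obtain \<epsilon> where \<epsilon>: "\<epsilon> > 0" "\<And>w. w \<in> span_plus_kernel F \<Longrightarrow> \<epsilon> \<le> p (f - w)"
    using assms unfolding seminorm_closed_def by (meson not_le)
  have "norm c * \<epsilon> \<le> p (smul c f - y)" if y: "y \<in> span F" for c y
  proof (cases "c = 0")
    case True then show ?thesis using p_nonneg by simp
  next
    case False
    have "smul c f - y = smul c (f - smul (inverse c) y)"
      using False by (simp add: scale_right_diff_distrib)
    then have "p (smul c f - y) = norm c * p (f - smul (inverse c) y)"
      by (simp add: p_scale)
    moreover have "\<epsilon> \<le> p (f - smul (inverse c) y)"
      using span_subset_span_plus_kernel y by (intro \<epsilon>(2)) (auto intro: span_scale)
    ultimately show ?thesis by (simp add: mult_left_mono)
  qed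
  with \<epsilon>(1) show ?thesis by (rule that)
qed

lemma span_plus_kernel_approx:
  assumes "\<forall>e>0. \<exists>w\<in>span_plus_kernel G. p (x - w) < e"
  obtains y where "\<And>n. y n \<in> span G" "(\<lambda>n. p (x - y n)) \<longlonglongrightarrow> 0"
proof -
  have "\<exists>y\<in>span G. p (x - y) < inverse (real (Suc n))" for n
  proof -
    obtain w where w: "w \<in> span_plus_kernel G" "p (x - w) < inverse (real (Suc n))"
      using assms by (meson inverse_positive_iff_positive of_nat_0_less_iff zero_less_Suc)
    then obtain y where "y \<in> span G" "p (w - y) = 0"
      unfolding span_plus_kernel_def by blast
    moreover have "p (x - y) < inverse (real (Suc n))"
      using w(2) p_triangle_diff[of x y w] \<open>p (w - y) = 0\<close> by linarith
    ultimately show ?thesis by blast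
  qed
  then obtain y where y: "\<And>n. y n \<in> span G" "\<And>n. p (x - y n) < inverse (real (Suc n))"
    by metis
  have "(\<lambda>n. p (x - y n)) \<longlonglongrightarrow> 0"
    using y(2) p_nonneg
    by (intro real_tendsto_sandwich[OF _ _ tendsto_const LIMSEQ_inverse_real_of_nat] always_eventually)
      (auto intro: less_imp_le)
  with y(1) show ?thesis by (rule that)
qed

lemma coefficients_converge:
  assumes "seminorm_closed p (span_plus_kernel F)" "f \<notin> span_plus_kernel F"
    and "\<And>n. w n - smul (c n) f \<in> span F" "(\<lambda>n. p (x - w n)) \<longlonglongrightarrow> 0"
  shows "convergent c"
proof -
  obtain \<epsilon> where \<epsilon>: "\<epsilon> > 0" "\<And>c y. y \<in> span F \<Longrightarrow> norm c * \<epsilon> \<le> p (smul c f - y)"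
    using span_plus_kernel_distance[OF assms(1,2)] by blast
  have "dist (c m) (c n) \<le> p (x - w m) / \<epsilon> + p (x - w n) / \<epsilon>" for m n
  proof -
    have eq: "smul (c m - c n) f - ((w n - smul (c n) f) - (w m - smul (c m) f))
        = (x - w n) - (x - w m)"
      by (simp add: scale_left_diff_distrib algebra_simps)
    have "norm (c m - c n) * \<epsilon> \<le> p ((x - w n) - (x - w m))"
      unfolding eq[symmetric] by (rule \<epsilon>(2), rule span_diff[OF assms(3) assms(3)])
    also have "\<dots> \<le> p (x - w m) + p (x - w n)"
      using p_triangle_diff[of "w m" "w n" x] p_commute[of "w m" x] by simp
    finally show ?thesis
      using \<epsilon>(1) by (simp add: dist_norm add_divide_distrib[symmetric] pos_le_divide_eq)
  qed
  moreover have "(\<lambda>n. p (x - w n) / \<epsilon>) \<longlonglongrightarrow> 0"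
    using assms(4) by (rule tendsto_divide_zero)
  ultimately have "Cauchy c" by (rule Cauchy_by_majorant)
  then show ?thesis by (simp add: Cauchy_convergent_iff)
qed

text \<open>Writing an
  approximating sequence as y n + c n f, the coefficients converge to some c0 and
  x - c0 f is approximated by span F, so it lies in span F + ker p.\<close>
lemma seminorm_closed_insert:
  assumes closed: "seminorm_closed p (span_plus_kernel F)" and f: "f \<notin> span_plus_kernel F"
  shows "seminorm_closed p (span_plus_kernel (insert f F))"
  unfolding seminorm_closed_def
proof (intro allI impI)
  fix x assume "\<forall>e>0. \<exists>w\<in>span_plus_kernel (insert f F). p (x - w) < e"
  then obtain w where w: "\<And>n. w n \<in> span (insert f F)" and wx: "(\<lambda>n. p (x - w n)) \<longlonglongrightarrow> 0"
    using span_plus_kernel_approx by blast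
  have "\<forall>n. \<exists>k. w n - smul k f \<in> span F"
    using w[unfolded span_breakdown_eq] by blast
  then obtain c where c: "\<And>n. w n - smul (c n) f \<in> span F"
    by metis
  obtain c0 where c0: "c \<longlonglongrightarrow> c0"
    using coefficients_converge[OF closed f c wx] by (auto simp: convergent_def)
  have lim: "(\<lambda>n. p (x - smul c0 f - (w n - smul (c n) f))) \<longlonglongrightarrow> 0"
  proof (rule real_tendsto_sandwich[OF _ _ tendsto_const])
    have "x - smul c0 f - (w n - smul (c n) f) = (x - w n) + smul (c n - c0) f" for n
      by (simp add: scale_left_diff_distrib algebra_simps)
    then have "p (x - smul c0 f - (w n - smul (c n) f)) \<le> p (x - w n) + p (smul (c n - c0) f)" for n
      by (simp only: p_triangle)
    then show "\<forall>\<^sub>F n in sequentially.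
        p (x - smul c0 f - (w n - smul (c n) f)) \<le> p (x - w n) + norm (c n - c0) * p f"
      by (simp add: p_scale)
    show "(\<lambda>n. p (x - w n) + norm (c n - c0) * p f) \<longlonglongrightarrow> 0"
      using c0 by (intro tendsto_add_zero wx tendsto_mult_left_zero tendsto_norm_zero)
        (simp add: LIM_zero)
  qed (simp add: p_nonneg)
  have "x - smul c0 f \<in> span_plus_kernel F"
    by (rule seminorm_closed_seq[OF closed _ lim]) (use c span_subset_span_plus_kernel in blast)
  then obtain y where y: "y \<in> span F" "p (x - smul c0 f - y) = 0"
    unfolding span_plus_kernel_def by blast
  have "y + smul c0 f \<in> span (insert f F)"
    using y(1) unfolding span_breakdown_eq by (intro exI[of _ c0]) simp
  moreover have "p (x - (y + smul c0 f)) = 0"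
    using y(2) by (simp add: diff_diff_eq add.commute)
  ultimately show "x \<in> span_plus_kernel (insert f F)"
    unfolding span_plus_kernel_def by blast
qed

lemma seminorm_closed_span_plus_kernel:
  assumes "finite F"
  shows "seminorm_closed p (span_plus_kernel F)"
  using assms
proof (induction F rule: finite_induct)
  case empty
  then show ?case by (rule seminorm_closed_kernel)
next
  case (insert f F)
  then show ?case
    using seminorm_closed_insert span_plus_kernel_insert_absorb by (cases "f \<in> span_plus_kernel F") auto
qed

lemma span_plus_kernel_proper:
  assumes "nontrivial_seminorm smul p" "finite F"
  shows "span_plus_kernel F \<noteq> UNIV"
  using assms unfolding nontrivial_seminorm_def seminorm_kernel_def span_plus_kernel_def by blast

end

lemma translation_isometry:
  fixes u x y :: "'a::{ab_group_add,metric_space}"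
  assumes inv: "\<And>x y z::'a. dist (x + z) (y + z) = dist x y"
  shows "dist (u + x) (u + y) = dist x y" and "dist (u - x) (u - y) = dist x y"
proof -
  show "dist (u + x) (u + y) = dist x y"
    using inv[of x u y] by (simp add: add.commute)
  have "dist ((u - x) + (x + y - u)) ((u - y) + (x + y - u)) = dist (u - x) (u - y)"
    by (rule inv)
  then show "dist (u - x) (u - y) = dist x y"
    by (simp add: algebra_simps dist_commute)
qed

lemma continuous_on_isometry:
  assumes "\<And>x y. dist (f x) (f y) = dist x y"
  shows "continuous_on S f"
  unfolding continuous_on_iff
proof (intro ballI allI impI)
  fix x and e :: real assume "e > 0"
  then show "\<exists>d>0. \<forall>x'\<in>S. dist x' x < d \<longrightarrow> dist (f x') (f x) < e"
    by (intro exI[of _ e]) (simp add: assms)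
qed

text \<open>A proper subspace of a topological vector space has empty interior: if u were interior,
  then u + t x0 would lie in V for small t \<noteq> 0, forcing x0 into V.\<close>
lemma proper_subspace_empty_interior:
  fixes smul :: "'k::real_normed_field \<Rightarrow> 'a::{ab_group_add,metric_space} \<Rightarrow> 'a"
  assumes vs: "vector_space smul" and V: "module.subspace smul V" "V \<noteq> UNIV"
    and inv: "\<And>x y z::'a. dist (x + z) (y + z) = dist x y"
    and cont: "continuous_on UNIV (\<lambda>w::'k \<times> 'a. smul (fst w) (snd w))"
  shows "interior V = {}"
proof (rule ccontr)
  interpret vector_space smul by (rule vs)
  assume "interior V \<noteq> {}"
  then obtain u where u: "u \<in> interior V" by blast
  obtain x0 where x0: "x0 \<notin> V" using V(2) by blast
  define t :: "nat \<Rightarrow> 'k" where "t n = of_real (inverse (real (Suc n)))" for n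
  have "t \<longlonglongrightarrow> 0"
    unfolding t_def using tendsto_of_real[OF LIMSEQ_inverse_real_of_nat, where 'a='k] by simp
  then have "(\<lambda>n. (t n, x0)) \<longlonglongrightarrow> (0, x0)"
    by (intro tendsto_Pair tendsto_const)
  then have "(\<lambda>n. smul (t n) x0) \<longlonglongrightarrow> 0"
    using continuous_on_tendsto_compose[OF cont] by fastforce
  then have "(\<lambda>n. dist (smul (t n) x0) 0) \<longlonglongrightarrow> 0"
    by (rule tendsto_dist_iff[THEN iffD1])
  then have "(\<lambda>n. dist (u + smul (t n) x0) u) \<longlonglongrightarrow> 0"
    using translation_isometry(1)[OF inv, of u _ 0] by simp
  then have "(\<lambda>n. u + smul (t n) x0) \<longlonglongrightarrow> u"
    by (rule tendsto_dist_iff[THEN iffD2])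
  then have "eventually (\<lambda>n. u + smul (t n) x0 \<in> interior V) sequentially"
    using topological_tendstoD[OF _ open_interior u] by blast
  then obtain n where "u + smul (t n) x0 \<in> interior V"
    unfolding eventually_sequentially by blast
  then have "smul (t n) x0 \<in> V"
    using subspace_diff[OF V(1), of "u + smul (t n) x0" u] u interior_subset by auto
  then have "smul (inverse (t n)) (smul (t n) x0) \<in> V"
    by (rule subspace_scale[OF V(1)])
  moreover have "t n \<noteq> 0"
    unfolding t_def of_real_eq_0_iff by (simp del: of_real_inverse of_real_of_nat_eq)
  ultimately show False using x0 by simp
qed

lemma seminorm_closed_imp_closed:
  fixes p :: "'a::{ab_group_add,metric_space} \<Rightarrow> real"
  assumes inv: "\<And>x y z::'a. dist (x + z) (y + z) = dist x y"
    and "continuous_on UNIV p" "p 0 = 0" "seminorm_closed p S"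
  shows "closed S"
  unfolding closed_def
proof (subst open_subopen, intro ballI)
  fix v assume "v \<in> - S"
  then obtain \<epsilon> where \<epsilon>: "\<epsilon> > 0" "\<And>w. w \<in> S \<Longrightarrow> \<epsilon> \<le> p (v - w)"
    using assms(4) unfolding seminorm_closed_def by (meson ComplD not_le)
  have "continuous_on UNIV (\<lambda>x. p (v - x))"
    by (rule continuous_on_compose2[OF assms(2) continuous_on_isometry])
      (simp_all add: translation_isometry(2)[OF inv])
  then have "open {x. p (v - x) < \<epsilon>}"
    by (intro open_Collect_less continuous_on_const)
  moreover have "{x. p (v - x) < \<epsilon>} \<subseteq> - S"
    using \<epsilon>(2) by (auto simp: not_le[symmetric])
  ultimately show "\<exists>T. open T \<and> v \<in> T \<and> T \<subseteq> - S"
    using \<epsilon>(1) assms(3) by auto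
qed

lemma dense_meets_open_outside:
  assumes "closure A = UNIV" "closed C" "interior C = {}" "open U" "U \<noteq> {}"
  shows "\<exists>a\<in>A \<inter> U. a \<notin> C"
proof -
  have "\<not> U \<subseteq> C" using interior_maximal[of U C] assms(3-5) by blast
  then have "(U - C) \<inter> A \<noteq> {}"
    using open_Int_closure_eq_empty[of "U - C" A] assms(1,2,4) by auto
  then show ?thesis by blast
qed

lemma p_independent_finite_character:
  "p_independent smul p B \<longleftrightarrow> (\<forall>F. finite F \<longrightarrow> F \<subseteq> B \<longrightarrow> p_independent smul p F)"
  unfolding p_independent_def by blast

lemma finite_subset_UN_incseq:
  assumes "incseq Fs" "finite S" "S \<subseteq> (\<Union>n. Fs n)"
  shows "\<exists>n. S \<subseteq> Fs n"
  using assms(2,3)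
proof (induction S rule: finite_induct)
  case empty
  then show ?case by blast
next
  case (insert x S)
  then obtain m n where "x \<in> Fs m" "S \<subseteq> Fs n" by auto
  moreover have "Fs m \<subseteq> Fs (max m n)" "Fs n \<subseteq> Fs (max m n)"
    using assms(1) unfolding incseq_def by simp_all
  ultimately show ?case by blast
qed

lemma dense_if_meets_balls:
  fixes A B :: "'a::metric_space set"
  assumes "closure A = UNIV" "\<And>a k. a \<in> A \<Longrightarrow> B \<inter> ball a (inverse (real (Suc k))) \<noteq> {}"
  shows "closure B = UNIV"
proof -
  have "x \<in> closure B" for x
    unfolding closure_approachable
  proof (intro allI impI)
    fix e :: real assume "e > 0"
    then obtain k where k: "inverse (real (Suc k)) < e / 2"
      using reals_Archimedean[of "e / 2"] by auto
    obtain a where a: "a \<in> A" "dist a x < e / 2"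
      using assms(1) \<open>e > 0\<close> closure_approachable[of x A] by (metis UNIV_I half_gt_zero)
    obtain b where b: "b \<in> B" "dist a b < inverse (real (Suc k))"
      using assms(2)[OF a(1), of k] by auto
    have "dist b x \<le> dist a b + dist a x"
      using dist_triangle[of b x a] by (simp add: dist_commute)
    then show "\<exists>y\<in>B. dist y x < e"
      using a(2) b k by (intro bexI[of _ b]) auto
  qed
  then show ?thesis by blast
qed

text \<open>The construction meets, one after the other, the countably
  many balls of radius 1/(k+1) centred at points of A.\<close>
lemma dense_subset_of_finite_character:
  fixes A :: "'a::metric_space set" and P :: "'a set \<Rightarrow> bool"
  assumes "countable A" "closure A = UNIV" "P {}"
    and finite_character: "\<And>B. P B \<longleftrightarrow> (\<forall>F. finite F \<longrightarrow> F \<subseteq> B \<longrightarrow> P F)"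
    and extend: "\<And>F U. finite F \<Longrightarrow> F \<subseteq> A \<Longrightarrow> P F \<Longrightarrow> open U \<Longrightarrow> U \<noteq> {} \<Longrightarrow>
        \<exists>a\<in>A \<inter> U. P (insert a F)"
  shows "\<exists>B\<subseteq>A. P B \<and> closure B = UNIV"
proof -
  have "A \<noteq> {}" using assms(2) by auto
  define g where "g = from_nat_into A"
  define U where "U n = ball (g (fst (prod_decode n))) (inverse (real (Suc (snd (prod_decode n)))))"
    for n
  have U: "open (U n)" "U n \<noteq> {}" for n
    unfolding U_def by auto
  have U_onto: "\<exists>n. U n = ball a (inverse (real (Suc k)))" if "a \<in> A" for a k
  proof -
    obtain i where "a = g i"
      using \<open>a \<in> A\<close> range_from_nat_into[OF \<open>A \<noteq> {}\<close> assms(1)] unfolding g_def by blast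
    then show ?thesis by (intro exI[of _ "prod_encode (i, k)"]) (simp add: U_def)
  qed
  have "\<exists>Fs. \<forall>n. (finite (Fs n) \<and> Fs n \<subseteq> A \<and> P (Fs n)) \<and> (\<exists>a\<in>A \<inter> U n. Fs (Suc n) = insert a (Fs n))"
  proof (rule dependent_nat_choice[where P="\<lambda>_ F. finite F \<and> F \<subseteq> A \<and> P F"
      and Q="\<lambda>n F G. \<exists>a\<in>A \<inter> U n. G = insert a F"])
    show "\<exists>F. finite F \<and> F \<subseteq> A \<and> P F" using assms(3) by blast
  next
    fix F n assume F: "finite F \<and> F \<subseteq> A \<and> P F"
    then obtain a where "a \<in> A \<inter> U n" "P (insert a F)" using extend[of F "U n"] U[of n] by blast
    then show "\<exists>G. (finite G \<and> G \<subseteq> A \<and> P G) \<and> (\<exists>a\<in>A \<inter> U n. G = insert a F)"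
      using F by (intro exI[of _ "insert a F"]) auto
  qed
  then obtain Fs where Fs: "\<And>n. finite (Fs n)" "\<And>n. Fs n \<subseteq> A" "\<And>n. P (Fs n)"
      and step: "\<And>n. \<exists>a\<in>A \<inter> U n. Fs (Suc n) = insert a (Fs n)"
    by blast
  have "Fs n \<subseteq> Fs (Suc n)" for n using step[of n] by auto
  then have "incseq Fs" by (rule incseq_SucI)
  define B where "B = (\<Union>n. Fs n)"
  have "B \<subseteq> A" using Fs(2) unfolding B_def by blast
  moreover have "P B"
    unfolding finite_character[of B]
  proof (intro allI impI)
    fix F assume "finite F" "F \<subseteq> B"
    then obtain n where "F \<subseteq> Fs n"
      using finite_subset_UN_incseq[OF \<open>incseq Fs\<close>] unfolding B_def by blast
    then show "P F" using Fs(3)[of n] finite_character[of "Fs n"] \<open>finite F\<close> by blast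
  qed
  moreover have "closure B = UNIV"
  proof (rule dense_if_meets_balls[OF assms(2)])
    fix a k assume "a \<in> A"
    then obtain n where "U n = ball a (inverse (real (Suc k)))" using U_onto by blast
    then show "B \<inter> ball a (inverse (real (Suc k))) \<noteq> {}"
      using step[of n] unfolding B_def by blast
  qed
  ultimately show ?thesis by blast
qed

text \<open>Main theorem: each W(F) is closed and nowhere dense, so the greedy construction applies
  to p-independence.\<close>
theorem lemma4p3:
  fixes smul :: "'k::{real_normed_field,banach} \<Rightarrow> 'a::{ab_group_add,complete_space} \<Rightarrow> 'a"
    and p :: "'a \<Rightarrow> real"
  assumes "frechet_space smul"
    and "separable_type TYPE('a)"
    and "seminorm_wrt smul p"
    and "continuous_on UNIV p"
    and "nontrivial_seminorm smul p"
    and "countable A" and "closure A = UNIV"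
  shows "\<exists>B\<subseteq>A. p_independent smul p B \<and> closure B = UNIV"
proof -
  have vs: "vector_space smul" and inv: "\<And>x y z::'a. dist (x + z) (y + z) = dist x y"
    and cont: "continuous_on UNIV (\<lambda>w::'k \<times> 'a. smul (fst w) (snd w))"
    using assms(1) unfolding frechet_space_def by auto
  interpret seminormed_space smul p
    using vs assms(3) unfolding seminormed_space_def seminormed_space_axioms_def seminorm_wrt_def
    by auto
  have nowhere_dense: "closed (span_plus_kernel F) \<and> interior (span_plus_kernel F) = {}"
    if "finite F" for F
    using seminorm_closed_imp_closed[OF inv assms(4) p_zero seminorm_closed_span_plus_kernel[OF that]]
      proper_subspace_empty_interior[OF vs subspace_span_plus_kernel
        span_plus_kernel_proper[OF assms(5) that] inv cont]
    by blast
  show ?thesis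
  proof (rule dense_subset_of_finite_character[OF assms(6,7)])
    show "p_independent smul p {}" unfolding p_independent_def by simp
    show "\<And>B. p_independent smul p B \<longleftrightarrow> (\<forall>F. finite F \<longrightarrow> F \<subseteq> B \<longrightarrow> p_independent smul p F)"
      by (rule p_independent_finite_character)
  next
    fix F U :: "'a set" assume "finite F" "F \<subseteq> A" "p_independent smul p F" "open U" "U \<noteq> {}"
    then obtain a where "a \<in> A \<inter> U" "a \<notin> span_plus_kernel F"
      using dense_meets_open_outside[OF assms(7)] nowhere_dense by blast
    then show "\<exists>a\<in>A \<inter> U. p_independent smul p (insert a F)"
      using p_independent_insert \<open>p_independent smul p F\<close> by blast
  qed
qed

end
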